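(* Let $1\le m\le n-1$, let $A\otimes B\in Y$, and let $g\in\mathrm{GL}_{m(n-m)}(\mathbb{R})$ be such that $(A\otimes B)g\in Y$. Then $g$ is an elementary tensor: $g=g_m\otimes g_{n-m}$ for some $g_m\in\mathrm{GL}_m(\mathbb{R})$ and $g_{n-m}\in\mathrm{GL}_{n-m}(\mathbb{R})$.
   Context: $Y=\{A\otimes B: A\in\mathrm{Mat}_{n\times m}(\mathbb{R}),B\in\mathrm{Mat}_{n\times(n-m)}(\mathbb{R})$ of full rank, column space of $A$ orthogonal to column space of $B\}$, where $A\otimes B=(a_{ij}B)_{i,j}$ denotes the Kronecker product (an $n^2\times m(n-m)$ matrix); similarly $g_m\otimes g_{n-m}$ is the Kronecker product. *)

theory Defs
  imports "Jordan_Normal_Form.DL_Rank"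
begin

definition kron :: "'a::times mat \<Rightarrow> 'a mat \<Rightarrow> 'a mat" where
  "kron A B = mat (dim_row A * dim_row B) (dim_col A * dim_col B)
     (\<lambda>(r, c). A $$ (r div dim_row B, c div dim_col B) * B $$ (r mod dim_row B, c mod dim_col B))"

definition full_rank :: "real mat \<Rightarrow> bool" where
  "full_rank A \<longleftrightarrow> vec_space.rank (dim_row A) A = min (dim_row A) (dim_col A)"

definition Y :: "nat \<Rightarrow> nat \<Rightarrow> real mat set" where
  "Y n m = {kron A B | A B. A \<in> carrier_mat n m \<and> B \<in> carrier_mat n (n - m)
       \<and> full_rank A \<and> full_rank B \<and> transpose_mat A * B = 0\<^sub>m m (n - m)}"

end

theory Submission
  imports Defs
begin

text \<open>A real matrix of full column rank has a left inverse, e.g. \<open>(A\<^sup>T A)\<^sup>-\<^sup>1 A\<^sup>T\<close>.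
If \<open>L A = 1\<close> and \<open>M B = 1\<close>, then by the mixed-product rule \<open>kron L M\<close> cancels \<open>kron A B\<close>
from the left, so \<open>(A\<^sub>0 \<otimes> B\<^sub>0) g = A\<^sub>1 \<otimes> B\<^sub>1\<close> forces \<open>g = L\<^sub>0 A\<^sub>1 \<otimes> M\<^sub>0 B\<^sub>1\<close>,
and symmetrically \<open>g\<^sup>-\<^sup>1 = L\<^sub>1 A\<^sub>0 \<otimes> M\<^sub>1 B\<^sub>0\<close>. A Kronecker product equals the identity only
if both factors are (reciprocal, nonzero) scalar matrices, so both factors of \<open>g\<close> are invertible.\<close>

lemma (in vec_space) non_distinct_cols_rank_less:
  assumes A: "A \<in> carrier_mat n nc" and nd: "\<not> distinct (cols A)"
  shows "rank A < nc"
proof -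
  obtain S where S: "maximal S (\<lambda>T. T \<subseteq> set (cols A) \<and> lin_indpt T)"
    using maximal_exists[of "\<lambda>T. T \<subseteq> set (cols A) \<and> lin_indpt T" "card (set (cols A))" "{}"]
    by (meson List.finite_set card_mono empty_iff empty_subsetI finite_lin_indpt2 rev_finite_subset)
  then have "card S \<le> card (set (cols A))" by (simp add: card_mono maximal_def)
  moreover have "card (set (cols A)) < nc"
    using A nd card_distinct[of "cols A"] card_length[of "cols A"] cols_length[of A]
    by (metis carrier_matD(2) nat_less_le)
  ultimately show ?thesis using rank_card_indpt[OF A S] by simp
qed

lemma (in vec_space) full_column_rank_mult_vec_eq_0:
  assumes A: "A \<in> carrier_mat n nc" and r: "rank A = nc"
    and v: "v \<in> carrier_vec nc" and Av: "A *\<^sub>v v = 0\<^sub>v n"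
  shows "v = 0\<^sub>v nc"
proof (rule ccontr)
  assume nz: "v \<noteq> 0\<^sub>v nc"
  show False
  proof (cases "distinct (cols A)")
    case True
    then have "lin_indpt (set (cols A))" using full_rank_lin_indpt r A by auto
    then show False using lin_depI[OF A v nz Av] True by blast
  next
    case False
    then show False using non_distinct_cols_rank_less[OF A] r by auto
  qed
qed

lemma full_column_rank_left_inverse:
  fixes A :: "real mat"
  assumes A: "A \<in> carrier_mat n k" and r: "vec_space.rank n A = k"
  obtains L where "L \<in> carrier_mat k n" and "L * A = 1\<^sub>m k"
proof -
  define G where "G = transpose_mat A * A"
  have G: "G \<in> carrier_mat k k" using A unfolding G_def by auto
  have "det G \<noteq> 0"
  proof
    assume "det G = 0"
    then obtain v where v: "v \<in> carrier_vec k" "v \<noteq> 0\<^sub>v k" "G *\<^sub>v v = 0\<^sub>v k"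
      using det_0_iff_vec_prod_zero_field[OF G] by blast
    have Av: "A *\<^sub>v v \<in> carrier_vec n" using A v by auto
    have "(A *\<^sub>v v) \<bullet> (A *\<^sub>v v) = (G *\<^sub>v v) \<bullet> v"
      using transpose_vec_mult_scalar[OF A v(1) Av] A v
      unfolding G_def by simp
    then have "A *\<^sub>v v = 0\<^sub>v n"
      using v conjugate_square_eq_0_vec[OF Av] by simp
    then show False using vec_space.full_column_rank_mult_vec_eq_0[OF A r v(1)] v(2) by simp
  qed
  then obtain C where C: "C \<in> carrier_mat k k" "C * G = 1\<^sub>m k"
    using det_non_zero_imp_unit[OF G, of "()"] unfolding Units_def ring_mat_def by auto
  show thesis
  proof
    show "C * transpose_mat A \<in> carrier_mat k n" using C A by auto
    show "C * transpose_mat A * A = 1\<^sub>m k"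
      using C A unfolding G_def by simp
  qed
qed

lemma full_rank_left_inverse:
  assumes "A \<in> carrier_mat n k" and "k \<le> n" and "full_rank A"
  obtains L where "L \<in> carrier_mat k n" and "L * A = 1\<^sub>m k"
proof -
  have "vec_space.rank n A = k"
    using assms unfolding full_rank_def by (simp add: min_absorb2)
  then show thesis using full_column_rank_left_inverse assms(1) that by blast
qed

lemma dim_row_kron [simp]: "dim_row (kron A B) = dim_row A * dim_row B"
  and dim_col_kron [simp]: "dim_col (kron A B) = dim_col A * dim_col B"
  unfolding kron_def by auto

lemma kron_carrier [simp]:
  "A \<in> carrier_mat p q \<Longrightarrow> B \<in> carrier_mat r s \<Longrightarrow> kron A B \<in> carrier_mat (p * r) (q * s)"
  by auto

lemma index_kron:
  assumes "A \<in> carrier_mat p q" "B \<in> carrier_mat r s" "i < p * r" "j < q * s"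
  shows "kron A B $$ (i, j) = A $$ (i div r, j div s) * B $$ (i mod r, j mod s)"
  using assms unfolding kron_def by auto

lemma index_kron_mult_add:
  assumes "A \<in> carrier_mat p q" "B \<in> carrier_mat r s"
    and "i < p" "j < q" "i' < r" "j' < s"
  shows "kron A B $$ (i * r + i', j * s + j') = A $$ (i, j) * B $$ (i', j')"
proof -
  have "i * r + i' < p * r"
    using assms(3,5) mult_le_mono1[of "Suc i" p r] by simp
  moreover have "j * s + j' < q * s"
    using assms(4,6) mult_le_mono1[of "Suc j" q s] by simp
  ultimately show ?thesis using index_kron[OF assms(1,2)] assms(5,6) by simp
qed

lemma sum_lessThan_mult_nat:
  fixes f :: "nat \<Rightarrow> 'b::comm_monoid_add"
  shows "(\<Sum>k<p * q. f k) = (\<Sum>x<p. \<Sum>y<q. f (x * q + y))"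
proof -
  have "(\<Sum>k<p * q. f k) = (\<Sum>x<p. \<Sum>k\<in>{x * q..<x * q + q}. f k)"
    by (rule sum.nat_group[symmetric])
  then show ?thesis by (simp add: sum.atLeastLessThan_shift_0 atLeast0LessThan)
qed

lemma kron_mult:
  fixes A :: "'a::comm_ring_1 mat"
  assumes A: "A \<in> carrier_mat p q" and B: "B \<in> carrier_mat r s"
    and C: "C \<in> carrier_mat q t" and D: "D \<in> carrier_mat s u"
  shows "kron A B * kron C D = kron (A * C) (B * D)"
proof (rule eq_matI)
  fix i j assume "i < dim_row (kron (A * C) (B * D))" "j < dim_col (kron (A * C) (B * D))"
  then have i: "i < p * r" and j: "j < t * u" using A B C D by (auto simp: kron_def)
  moreover have "0 < r" "0 < u" using i j by (auto intro: gr0I)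
  ultimately have ir: "i div r < p" "i mod r < r" and ju: "j div u < t" "j mod u < u"
    by (auto simp: less_mult_imp_div_less)
  have "(kron A B * kron C D) $$ (i, j) = (\<Sum>k<q * s. kron A B $$ (i, k) * kron C D $$ (k, j))"
    using A B C D i j by (simp add: scalar_prod_def atLeast0LessThan)
  also have "\<dots> = (\<Sum>x<q. \<Sum>y<s. (A $$ (i div r, x) * C $$ (x, j div u)) * (B $$ (i mod r, y) * D $$ (y, j mod u)))"
    unfolding sum_lessThan_mult_nat
  proof (intro sum.cong refl)
    fix x y assume "x \<in> {..<q}" and "y \<in> {..<s}"
    then have "kron A B $$ (i, x * s + y) = A $$ (i div r, x) * B $$ (i mod r, y)"
      and "kron C D $$ (x * s + y, j) = C $$ (x, j div u) * D $$ (y, j mod u)"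
      using index_kron_mult_add[OF A B ir(1) _ ir(2)] index_kron_mult_add[OF C D _ ju(1) _ ju(2)]
      by auto
    then show "kron A B $$ (i, x * s + y) * kron C D $$ (x * s + y, j)
      = (A $$ (i div r, x) * C $$ (x, j div u)) * (B $$ (i mod r, y) * D $$ (y, j mod u))"
      by (simp add: ac_simps)
  qed
  also have "\<dots> = (\<Sum>x<q. A $$ (i div r, x) * C $$ (x, j div u)) * (\<Sum>y<s. B $$ (i mod r, y) * D $$ (y, j mod u))"
    by (rule sum_product[symmetric])
  also have "\<dots> = kron (A * C) (B * D) $$ (i, j)"
    using A B C D i j ir ju index_kron[of "A * C" p t "B * D" r u i j]
    by (simp add: scalar_prod_def atLeast0LessThan)
  finally show "(kron A B * kron C D) $$ (i, j) = kron (A * C) (B * D) $$ (i, j)" .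
qed (use A B C D in auto)

lemma kron_one: "kron (1\<^sub>m p) (1\<^sub>m q) = (1\<^sub>m (p * q) :: 'a::semiring_1 mat)"
proof (rule eq_matI)
  fix i j assume "i < dim_row (1\<^sub>m (p * q) :: 'a mat)" "j < dim_col (1\<^sub>m (p * q) :: 'a mat)"
  then have i: "i < p * q" and j: "j < p * q" by auto
  moreover have "0 < q" using i by (auto intro: gr0I)
  ultimately have "kron (1\<^sub>m p) (1\<^sub>m q) $$ (i, j)
      = (if i div q = j div q then 1 else 0) * (if i mod q = j mod q then (1::'a) else 0)"
    using index_kron[of "1\<^sub>m p" p p "1\<^sub>m q" q q i j] by (simp add: less_mult_imp_div_less)
  moreover have "(i div q = j div q \<and> i mod q = j mod q) = (i = j)"
    by (metis div_mult_mod_eq)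
  ultimately show "kron (1\<^sub>m p) (1\<^sub>m q) $$ (i, j) = (1\<^sub>m (p * q) :: 'a mat) $$ (i, j)"
    using i j by auto
qed (auto simp: kron_def)

lemma kron_eq_one_imp_scalar:
  fixes U :: "'a::field mat"
  assumes U: "U \<in> carrier_mat p p" and V: "V \<in> carrier_mat q q" and "0 < p" "0 < q"
    and UV: "kron U V = 1\<^sub>m (p * q)"
  shows "\<exists>c. c \<noteq> 0 \<and> U = c \<cdot>\<^sub>m 1\<^sub>m p \<and> V = (1 / c) \<cdot>\<^sub>m 1\<^sub>m q"
proof -
  have entry: "U $$ (i, j) * V $$ (i', j') = (if i = j \<and> i' = j' then 1 else 0)"
    if "i < p" "j < p" "i' < q" "j' < q" for i j i' j'
  proof -
    have "i * q + i' < p * q" "j * q + j' < p * q"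
      using that mult_le_mono1[of "Suc i" p q] mult_le_mono1[of "Suc j" p q] by simp_all
    moreover have "(i * q + i' = j * q + j') = (i = j \<and> i' = j')"
    proof -
      have "(i * q + i') div q = i" "(i * q + i') mod q = i'"
        "(j * q + j') div q = j" "(j * q + j') mod q = j'"
        using that(3,4) by auto
      then show ?thesis by metis
    qed
    ultimately show ?thesis
      using UV index_kron_mult_add[OF U V that] by auto
  qed
  define c where "c = U $$ (0, 0)"
  have c: "c * V $$ (0, 0) = 1" using entry[of 0 0 0 0] assms(3,4) unfolding c_def by simp
  then have "c \<noteq> 0" by auto
  moreover have "U = c \<cdot>\<^sub>m 1\<^sub>m p"
  proof (rule eq_matI)
    fix i j assume "i < dim_row (c \<cdot>\<^sub>m 1\<^sub>m p)" "j < dim_col (c \<cdot>\<^sub>m 1\<^sub>m p)"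
    moreover have "U $$ (i, j) = c * (U $$ (i, j) * V $$ (0, 0))"
      using c by (metis mult.left_commute mult_1_right)
    ultimately show "U $$ (i, j) = (c \<cdot>\<^sub>m 1\<^sub>m p) $$ (i, j)"
      using entry[of i j 0 0] assms(4) by simp
  qed (use U in auto)
  moreover have "V = (1 / c) \<cdot>\<^sub>m 1\<^sub>m q"
  proof (rule eq_matI)
    fix i j assume "i < dim_row ((1 / c) \<cdot>\<^sub>m 1\<^sub>m q)" "j < dim_col ((1 / c) \<cdot>\<^sub>m 1\<^sub>m q)"
    then show "V $$ (i, j) = ((1 / c) \<cdot>\<^sub>m 1\<^sub>m q) $$ (i, j)"
      using entry[of 0 0 i j] \<open>c \<noteq> 0\<close> assms(3) unfolding c_def by (simp add: field_simps)
  qed (use V in auto)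
  ultimately show ?thesis by blast
qed

lemma invertible_if_mult_eq_smult_one:
  fixes G :: "'a::field mat"
  assumes G: "G \<in> carrier_mat n n" and X: "X \<in> carrier_mat n n"
    and "c \<noteq> 0" and GX: "G * X = c \<cdot>\<^sub>m 1\<^sub>m n"
  shows "invertible_mat G"
proof -
  define Z where "Z = (1 / c) \<cdot>\<^sub>m X"
  have Z: "Z \<in> carrier_mat n n" using X unfolding Z_def by simp
  have "G * Z = (1 / c) \<cdot>\<^sub>m (G * X)" unfolding Z_def using G X by (simp add: mult_smult_distrib)
  also have "\<dots> = 1\<^sub>m n" unfolding GX using \<open>c \<noteq> 0\<close> by (intro eq_matI) auto
  finally have GZ: "G * Z = 1\<^sub>m n" .
  then have "Z * G = 1\<^sub>m n" using mat_mult_left_right_inverse[OF G Z] by blast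
  then show ?thesis
    using G Z GZ unfolding invertible_mat_def inverts_mat_def by auto
qed

lemma kron_mult_eq_one_imp_invertible:
  fixes U :: "'a::field mat"
  assumes U: "U \<in> carrier_mat p p" and X: "X \<in> carrier_mat p p"
    and V: "V \<in> carrier_mat q q" and W: "W \<in> carrier_mat q q"
    and "0 < p" "0 < q" and E: "kron U V * kron X W = 1\<^sub>m (p * q)"
  shows "invertible_mat U \<and> invertible_mat V"
proof -
  have "kron (U * X) (V * W) = 1\<^sub>m (p * q)"
    using E kron_mult[OF U V X W] by simp
  then obtain c where "c \<noteq> 0" "U * X = c \<cdot>\<^sub>m 1\<^sub>m p" "V * W = (1 / c) \<cdot>\<^sub>m 1\<^sub>m q"
    using kron_eq_one_imp_scalar[of "U * X" p "V * W" q] U X V W assms(5,6) by auto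
  then show ?thesis
    using invertible_if_mult_eq_smult_one[OF U X _ \<open>U * X = _\<close>]
      invertible_if_mult_eq_smult_one[OF V W _ \<open>V * W = _\<close>] by simp
qed

lemma kron_mult_cancel_left_inverses:
  fixes A :: "'a::comm_ring_1 mat"
  assumes A: "A \<in> carrier_mat p q" and L: "L \<in> carrier_mat q p" and LA: "L * A = 1\<^sub>m q"
    and B: "B \<in> carrier_mat r s" and M: "M \<in> carrier_mat s r" and MB: "M * B = 1\<^sub>m s"
    and A': "A' \<in> carrier_mat p q'" and B': "B' \<in> carrier_mat r s'"
    and G: "G \<in> carrier_mat (q * s) t" and E: "kron A B * G = kron A' B'"
  shows "G = kron (L * A') (M * B')"
proof -
  have "G = kron (L * A) (M * B) * G"
    using G by (simp add: LA MB kron_one)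
  also have "\<dots> = kron L M * kron A B * G"
    using kron_mult[OF L M A B] by simp
  also have "\<dots> = kron L M * (kron A B * G)"
    using L M A B G by (intro assoc_mult_mat) auto
  also have "\<dots> = kron (L * A') (M * B')"
    using E kron_mult[OF L M A' B'] by simp
  finally show ?thesis .
qed

lemma Y_memberE:
  assumes "P \<in> Y n m" and "m \<le> n"
  obtains A L B M where "A \<in> carrier_mat n m" "L \<in> carrier_mat m n" "L * A = 1\<^sub>m m"
    and "B \<in> carrier_mat n (n - m)" "M \<in> carrier_mat (n - m) n" "M * B = 1\<^sub>m (n - m)"
    and "P = kron A B"
proof -
  obtain A B where A: "A \<in> carrier_mat n m" "full_rank A"
    and B: "B \<in> carrier_mat n (n - m)" "full_rank B" and P: "P = kron A B"
    using assms(1) unfolding Y_def by blast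
  obtain L where "L \<in> carrier_mat m n" "L * A = 1\<^sub>m m"
    using full_rank_left_inverse A assms(2) by blast
  moreover obtain M where "M \<in> carrier_mat (n - m) n" "M * B = 1\<^sub>m (n - m)"
    using full_rank_left_inverse B by (metis diff_le_self)
  ultimately show thesis using that A(1) B(1) P by blast
qed

theorem mainTheorem10:
  fixes n m :: nat and A B g :: "real mat"
  assumes "1 \<le> m" and "m \<le> n - 1"
    and "A \<in> carrier_mat n m" and "B \<in> carrier_mat n (n - m)"
    and "kron A B \<in> Y n m"
    and "g \<in> carrier_mat (m * (n - m)) (m * (n - m))" and "invertible_mat g"
    and "kron A B * g \<in> Y n m"
  shows "\<exists>gm gnm. gm \<in> carrier_mat m m \<and> invertible_mat gm
           \<and> gnm \<in> carrier_mat (n - m) (n - m) \<and> invertible_mat gnm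
           \<and> g = kron gm gnm"
proof -
  have m: "0 < m" "0 < n - m" "m \<le> n" using assms(1,2) by auto
  obtain A0 L0 B0 M0 where A0: "A0 \<in> carrier_mat n m" "L0 \<in> carrier_mat m n" "L0 * A0 = 1\<^sub>m m"
    and B0: "B0 \<in> carrier_mat n (n - m)" "M0 \<in> carrier_mat (n - m) n" "M0 * B0 = 1\<^sub>m (n - m)"
    and P: "kron A B = kron A0 B0"
    by (rule Y_memberE[OF assms(5) m(3)])
  obtain A1 L1 B1 M1 where A1: "A1 \<in> carrier_mat n m" "L1 \<in> carrier_mat m n" "L1 * A1 = 1\<^sub>m m"
    and B1: "B1 \<in> carrier_mat n (n - m)" "M1 \<in> carrier_mat (n - m) n" "M1 * B1 = 1\<^sub>m (n - m)"
    and Q: "kron A B * g = kron A1 B1"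
    by (rule Y_memberE[OF assms(8) m(3)])
  obtain h where "inverts_mat g h" "inverts_mat h g"
    using assms(7) unfolding invertible_mat_def by blast
  then have gh: "g * h = 1\<^sub>m (m * (n - m))" and hg: "h * g = 1\<^sub>m (dim_row h)"
    using assms(6) unfolding inverts_mat_def by auto
  have h: "h \<in> carrier_mat (m * (n - m)) (m * (n - m))"
    using arg_cong[OF gh, of dim_col] arg_cong[OF hg, of dim_col] assms(6) by auto
  have g: "g = kron (L0 * A1) (M0 * B1)"
    using kron_mult_cancel_left_inverses[OF A0(1,2,3) B0(1,2,3) A1(1) B1(1) assms(6)] P Q by simp
  have "kron A1 B1 * h = kron A0 B0 * g * h"
    using P Q by simp
  also have "\<dots> = kron A0 B0 * (g * h)"
    using A0(1) B0(1) assms(6) h by (intro assoc_mult_mat) auto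
  also have "\<dots> = kron A0 B0"
    using gh A0(1) B0(1) by simp
  finally have "kron A1 B1 * h = kron A0 B0" .
  then have "h = kron (L1 * A0) (M1 * B0)"
    using kron_mult_cancel_left_inverses[OF A1(1,2,3) B1(1,2,3) A0(1) B0(1) h] by simp
  then have "invertible_mat (L0 * A1) \<and> invertible_mat (M0 * B1)"
    using kron_mult_eq_one_imp_invertible[of "L0 * A1" m "L1 * A0" "M0 * B1" "n - m" "M1 * B0"]
      gh g A0 A1 B0 B1 m(1,2) by auto
  moreover have "L0 * A1 \<in> carrier_mat m m" "M0 * B1 \<in> carrier_mat (n - m) (n - m)"
    using A0 A1 B0 B1 by auto
  ultimately show ?thesis using g by blast
qed

end
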